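(* Let $T:\mathcal P(\mathbb R^n)\to\mathcal P(\mathbb R^n)$ be given by $TA=\{y\in\mathbb R^n:\ \langle x,y\rangle\ge 1\ \forall x\in A\}$, and let $\mathcal C=\{TK:K\subseteq\mathbb R^n\}$. Every $K\in\mathcal C$ other than $\emptyset$ and $\mathbb R^n$ has a unique point closest to the origin. For $u\in S^{n-1}$ let $\mathcal C_u$ be the set of those $K\in\mathcal C\setminus\{\emptyset,\mathbb R^n\}$ whose closest point to the origin lies on the ray $\{\lambda u:\lambda>0\}$. Then for every $u\in S^{n-1}$ and every $K\in\mathcal C_u$ we have $TK\in\mathcal C_u$.
   Context: $\mathcal P(\mathbb R^n)$ is the power set of $\mathbb R^n$, $\langle\cdot,\cdot\rangle$ the standard inner product, and $S^{n-1}$ the Euclidean unit sphere. *)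

theory Defs
  imports "HOL-Analysis.Analysis"
begin

definition polT :: "'a::euclidean_space set \<Rightarrow> 'a set" where
  "polT A = {y. \<forall>x\<in>A. inner x y \<ge> 1}"

definition classC :: "'a::euclidean_space set set" where
  "classC = range polT"

definition classC_u :: "'a::euclidean_space \<Rightarrow> 'a set set" where
  "classC_u u = {K \<in> classC - {{}, UNIV}.
      \<exists>l::real. l > 0 \<and> closest_point K 0 = l *\<^sub>R u}"

end

theory Submission
  imports Defs
begin

text \<open>If p is the point of K closest to the origin, then K lies in the halfspace
  {y. \<langle>p, y\<rangle> \<ge> |p|^2}, so p / |p|^2 lies in T K; conversely every z in T K satisfies
  1 \<le> \<langle>p, z\<rangle> \<le> |p| |z|, so no point of T K is closer to the origin than p / |p|^2.
  Hence the closest point of T K is a positive multiple of that of K.\<close>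

lemma polT_eq: "polT A = (\<Inter>x\<in>A. {y. inner x y \<ge> 1})"
  unfolding polT_def by auto

lemma closed_polT: "closed (polT A)"
  unfolding polT_eq by (intro closed_INT) (simp add: closed_halfspace_ge)

lemma convex_polT: "convex (polT A)"
  unfolding polT_eq by (intro convex_INT) (simp add: convex_halfspace_ge)

lemma polT_neq_UNIV:
  assumes "A \<noteq> {}"
  shows "polT A \<noteq> UNIV"
proof
  assume "polT A = UNIV"
  then have "0 \<in> polT A" by simp
  with assms show False unfolding polT_def by auto
qed

lemma closest_point_origin_inner_ge:
  fixes S :: "'a::euclidean_space set"
  assumes "closed S" "convex S" "y \<in> S"
  shows "(norm (closest_point S 0))\<^sup>2 \<le> inner (closest_point S 0) y"
proof -
  let ?p = "closest_point S 0"
  have "inner (0 - ?p) (y - ?p) \<le> 0"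
    using closest_point_dot[OF assms(2,1,3)] .
  then show ?thesis by (simp add: inner_diff_right power2_norm_eq_inner)
qed

lemma scaled_closest_point_in_polT:
  fixes S :: "'a::euclidean_space set"
  assumes "closed S" "convex S" "closest_point S 0 \<noteq> 0"
  shows "inverse ((norm (closest_point S 0))\<^sup>2) *\<^sub>R closest_point S 0 \<in> polT S"
proof -
  have "1 \<le> inner y (inverse ((norm (closest_point S 0))\<^sup>2) *\<^sub>R closest_point S 0)"
    if "y \<in> S" for y
    using closest_point_origin_inner_ge[OF assms(1,2) that] assms(3)
    by (simp add: inner_commute field_simps)
  then show ?thesis unfolding polT_def by auto
qed

lemma closest_point_polT:
  fixes S :: "'a::euclidean_space set"
  assumes "closed S" "convex S" "S \<noteq> {}" and p: "closest_point S 0 = p" "p \<noteq> 0"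
  shows "closest_point (polT S) 0 = inverse ((norm p)\<^sup>2) *\<^sub>R p"
proof (rule sym, rule closest_point_unique[OF convex_polT closed_polT])
  let ?q = "inverse ((norm p)\<^sup>2) *\<^sub>R p"
  show "?q \<in> polT S"
    using scaled_closest_point_in_polT[OF assms(1,2)] p by simp
  have pS: "p \<in> S"
    using closest_point_in_set[OF assms(1,3), of 0] p(1) by simp
  show "\<forall>z\<in>polT S. dist 0 ?q \<le> dist 0 z"
  proof
    fix z assume "z \<in> polT S"
    with pS have "1 \<le> inner p z" unfolding polT_def by auto
    also have "\<dots> \<le> norm p * norm z" by (rule norm_cauchy_schwarz)
    finally have "inverse (norm p) \<le> norm z"
      using p(2) by (simp add: field_simps)
    then show "dist 0 ?q \<le> dist 0 z"
      using p(2) by (simp add: power2_eq_square field_simps)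
  qed
qed

theorem lemma5p2:
  fixes u :: "'a::euclidean_space" and K :: "'a set"
  assumes "u \<in> sphere 0 1"
    and "K \<in> classC_u u"
  shows "polT K \<in> classC_u u"
proof -
  have u: "norm u = 1" using assms(1) by simp
  obtain A where KA: "K = polT A" and "K \<noteq> {}"
    using assms(2) unfolding classC_u_def classC_def by auto
  obtain l :: real where l: "l > 0" and cp: "closest_point K 0 = l *\<^sub>R u"
    using assms(2) unfolding classC_u_def by auto
  have "closed K" "convex K" using KA closed_polT convex_polT by auto
  then have "closest_point (polT K) 0 = inverse ((norm (l *\<^sub>R u))\<^sup>2) *\<^sub>R (l *\<^sub>R u)"
    using closest_point_polT \<open>K \<noteq> {}\<close> cp l u by fastforce
  also have "\<dots> = inverse l *\<^sub>R u"
    using l u by (simp add: power2_eq_square)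
  finally have cp_polT: "closest_point (polT K) 0 = inverse l *\<^sub>R u" .
  have "closest_point K 0 \<noteq> 0" using cp l u by auto
  then have "polT K \<noteq> {}"
    using scaled_closest_point_in_polT[OF \<open>closed K\<close> \<open>convex K\<close>] by blast
  then show ?thesis
    using cp_polT l polT_neq_UNIV[OF \<open>K \<noteq> {}\<close>]
    unfolding classC_u_def classC_def by (auto intro!: exI[of _ "inverse l"])
qed

end
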